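(* Let $X$ be a tree of bounded valence, $\Gamma<\operatorname{Aut}(X)$ with $\Gamma\backslash X_0$ finite, $p$ a $\Gamma$-invariant transition kernel with $(X_0,p)$ irreducible and $k\in\mathbb{N}$ with $d(x,y)>k\Rightarrow p(x,y)=0$. Then for every complex $z$ of sufficiently small modulus, $v_z=z\,\psi(v_z)$; that is, for every $(a,b)_y\in\Xi$, $$G_z(a,b;\mathcal{B}(y)^\complement)=z\,p(a,b)+\sum_{c\in\mathcal{B}(y)^\complement}z\,p(a,c)\,(v_z)_{[c,y]}(c,b).$$
   Context: $\mathcal{B}(y)=\{w:d(y,w)\le k\}$, $\partial\mathcal{B}(y)=\{w:d(y,w)=k+1\}$. $p^{(n)}(a,b;\Omega)=\sum p(\omega_0,\omega_1)\cdots p(\omega_{n-1},\omega_n)$ over sequences from $a$ to $b$ with $\omega_1,\dots,\omega_{n-1}\in\Omega$; $G_z(a,b;\Omega)=\sum_np^{(n)}(a,b;\Omega)z^n$. $\Xi_y=\{(a,b)\in\partial\mathcal{B}(y)\times\mathcal{B}(y):\exists n,\,p^{(n)}(a,b;\mathcal{B}(y)^\complement)>0\}$, $\Xi=\bigsqcup_y\Xi_y$ with elements $(a,b)_y$. $v_z:\Xi\to\mathbb{C}$, $v_z((a,b)_y)=G_z(a,b;\mathcal{B}(y)^\complement)$. For distinct $x,y$ with geodesic $[x,y]=(x_0,\dots,x_m)$, $\Xi_{[x,y]}$ is the set of tuples $(c_0,\dots,c_l)$, $0<l\le m$, for which there are integers $0<i_1<\dots<i_l\le m$ with $c_0\in\mathcal{B}(x)\cap\partial\mathcal{B}(x_{i_1})$,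 $c_j\in\mathcal{B}(x_{i_j})\cap\partial\mathcal{B}(x_{i_{j+1}})$ for $1\le j\le l-1$, $c_l\in\mathcal{B}(x_{i_l})\cap\mathcal{B}(y)$, and $(c_{j-1},c_j)\in\Xi_{x_{i_j}}$ for all $j$; the indices are determined by $i_s=1+\max\{i:c_{s-1}\in\mathcal{B}(x_i)\}$. For $J:\Xi\to\mathbb{C}$ and $c\in\mathcal{B}(x)\setminus\mathcal{B}(y)$, $b\in\mathcal{B}(y)$: $J_{[x,y]}(c,b)=\sum_{(c_0,\dots,c_l)\in\Xi_{[x,y]},\,c_0=c,\,c_l=b}\prod_{j=1}^lJ((c_{j-1},c_j)_{x_{i_j}})$ (a finite sum). The map $\psi$ on functions $\Xi\to\mathbb{C}$ is $\psi(J)((a,b)_y)=p(a,b)+\sum_{c\in\mathcal{B}(y)^\complement}p(a,c)J_{[c,y]}(c,b)$. *)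

theory Defs
  imports "HOL-Analysis.Analysis"
begin

definition walk :: "('v \<Rightarrow> 'v \<Rightarrow> bool) \<Rightarrow> 'v list \<Rightarrow> bool" where
  "walk E ws \<longleftrightarrow> ws \<noteq> [] \<and> (\<forall>i. Suc i < length ws \<longrightarrow> E (ws ! i) (ws ! Suc i))"

definition is_cycle :: "('v \<Rightarrow> 'v \<Rightarrow> bool) \<Rightarrow> 'v list \<Rightarrow> bool" where
  "is_cycle E ws \<longleftrightarrow> walk E ws \<and> length ws \<ge> 3 \<and> distinct ws \<and> E (last ws) (hd ws)"

definition is_tree :: "('v \<Rightarrow> 'v \<Rightarrow> bool) \<Rightarrow> bool" where
  "is_tree E \<longleftrightarrow> (\<forall>x y. E x y \<longrightarrow> E y x) \<and> (\<forall>x. \<not> E x x)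
     \<and> (\<forall>x y. \<exists>ws. walk E ws \<and> hd ws = x \<and> last ws = y)
     \<and> (\<nexists>ws. is_cycle E ws)"

definition bounded_valence :: "('v \<Rightarrow> 'v \<Rightarrow> bool) \<Rightarrow> bool" where
  "bounded_valence E \<longleftrightarrow> (\<exists>D::nat. \<forall>x. finite {y. E x y} \<and> card {y. E x y} \<le> D)"

definition gdist :: "('v \<Rightarrow> 'v \<Rightarrow> bool) \<Rightarrow> 'v \<Rightarrow> 'v \<Rightarrow> nat" where
  "gdist E x y = (LEAST n. \<exists>ws. walk E ws \<and> hd ws = x \<and> last ws = y \<and> length ws = Suc n)"

text \<open>The geodesic [x,y] = (x_0,...,x_m), as a list of length m+1.\<close>
definition geod :: "('v \<Rightarrow> 'v \<Rightarrow> bool) \<Rightarrow> 'v \<Rightarrow> 'v \<Rightarrow> 'v list" where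
  "geod E x y = (THE ws. walk E ws \<and> hd ws = x \<and> last ws = y \<and> length ws = Suc (gdist E x y))"

definition is_aut :: "('v \<Rightarrow> 'v \<Rightarrow> bool) \<Rightarrow> ('v \<Rightarrow> 'v) \<Rightarrow> bool" where
  "is_aut E g \<longleftrightarrow> bij g \<and> (\<forall>x y. E x y \<longleftrightarrow> E (g x) (g y))"

definition aut_subgroup :: "('v \<Rightarrow> 'v \<Rightarrow> bool) \<Rightarrow> ('v \<Rightarrow> 'v) set \<Rightarrow> bool" where
  "aut_subgroup E \<Gamma> \<longleftrightarrow> (\<forall>g\<in>\<Gamma>. is_aut E g) \<and> id \<in> \<Gamma>
     \<and> (\<forall>g\<in>\<Gamma>. \<forall>h\<in>\<Gamma>. g \<circ> h \<in> \<Gamma>) \<and> (\<forall>g\<in>\<Gamma>. inv g \<in> \<Gamma>)"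

text \<open>The set of \<Gamma>-orbits on the vertex set X_0 (= UNIV).\<close>
definition orbits :: "('v \<Rightarrow> 'v) set \<Rightarrow> 'v set set" where
  "orbits \<Gamma> = {(\<lambda>g. g x) ` \<Gamma> | x. True}"

definition transition_kernel :: "('v \<Rightarrow> 'v \<Rightarrow> real) \<Rightarrow> bool" where
  "transition_kernel p \<longleftrightarrow> (\<forall>x y. p x y \<ge> 0) \<and> (\<forall>x. (p x has_sum 1) UNIV)"

text \<open>p^(n)(a,b;\<Omega>): sum over sequences a = w_0, w_1, ..., w_n = b with
  w_1,...,w_{n-1} in \<Omega> of p(w_0,w_1)...p(w_{n-1},w_n).\<close>
definition pn :: "('v \<Rightarrow> 'v \<Rightarrow> real) \<Rightarrow> nat \<Rightarrow> 'v set \<Rightarrow> 'v \<Rightarrow> 'v \<Rightarrow> real" where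
  "pn p n \<Omega> a b =
     (if n = 0 then (if a = b then 1 else 0)
      else (\<Sum>\<^sub>\<infinity>ws\<in>{ws. length ws = n - 1 \<and> set ws \<subseteq> \<Omega>}.
              prod_list (map2 p (a # ws) (ws @ [b]))))"

definition irreducible_kernel :: "('v \<Rightarrow> 'v \<Rightarrow> real) \<Rightarrow> bool" where
  "irreducible_kernel p \<longleftrightarrow> (\<forall>x y. \<exists>n. pn p n UNIV x y > 0)"

definition Gz :: "('v \<Rightarrow> 'v \<Rightarrow> real) \<Rightarrow> complex \<Rightarrow> 'v \<Rightarrow> 'v \<Rightarrow> 'v set \<Rightarrow> complex" where
  "Gz p z a b \<Omega> = (\<Sum>n. complex_of_real (pn p n \<Omega> a b) * z ^ n)"

definition ball_k :: "('v \<Rightarrow> 'v \<Rightarrow> bool) \<Rightarrow> nat \<Rightarrow> 'v \<Rightarrow> 'v set" where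
  "ball_k E k y = {w. gdist E y w \<le> k}"

definition bdry_k :: "('v \<Rightarrow> 'v \<Rightarrow> bool) \<Rightarrow> nat \<Rightarrow> 'v \<Rightarrow> 'v set" where
  "bdry_k E k y = {w. gdist E y w = Suc k}"

definition Xi :: "('v \<Rightarrow> 'v \<Rightarrow> bool) \<Rightarrow> ('v \<Rightarrow> 'v \<Rightarrow> real) \<Rightarrow> nat \<Rightarrow> 'v \<Rightarrow> ('v \<times> 'v) set" where
  "Xi E p k y = {(a, b). a \<in> bdry_k E k y \<and> b \<in> ball_k E k y
                  \<and> (\<exists>n. pn p n (- ball_k E k y) a b > 0)}"

text \<open>\<Xi> as a disjoint union: the element (a,b)_y is the triple (a,b,y).\<close>
definition XiAll :: "('v \<Rightarrow> 'v \<Rightarrow> bool) \<Rightarrow> ('v \<Rightarrow> 'v \<Rightarrow> real) \<Rightarrow> nat \<Rightarrow> ('v \<times> 'v \<times> 'v) set" where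
  "XiAll E p k = {(a, b, y). (a, b) \<in> Xi E p k y}"

definition vz :: "('v \<Rightarrow> 'v \<Rightarrow> bool) \<Rightarrow> ('v \<Rightarrow> 'v \<Rightarrow> real) \<Rightarrow> nat \<Rightarrow> complex
                   \<Rightarrow> 'v \<times> 'v \<times> 'v \<Rightarrow> complex" where
  "vz E p k z = (\<lambda>(a, b, y). Gz p z a b (- ball_k E k y))"

text \<open>Admissible index data: cs = (c_0,...,c_l), "is" = (i_1,...,i_l) (0-based list,
  is!(j-1) = i_j), along the geodesic xs = [x,y] = (x_0,...,x_m).\<close>
definition Xi_path_idx :: "('v \<Rightarrow> 'v \<Rightarrow> bool) \<Rightarrow> ('v \<Rightarrow> 'v \<Rightarrow> real) \<Rightarrow> nat \<Rightarrow> 'v \<Rightarrow> 'v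
                            \<Rightarrow> 'v list \<Rightarrow> nat list \<Rightarrow> bool" where
  "Xi_path_idx E p k x y cs is \<longleftrightarrow>
     (let xs = geod E x y; m = length xs - 1; l = length is in
        length cs = Suc l \<and> 0 < l \<and> l \<le> m
      \<and> 0 < is ! 0 \<and> (\<forall>j. Suc j < l \<longrightarrow> is ! j < is ! Suc j) \<and> is ! (l - 1) \<le> m
      \<and> cs ! 0 \<in> ball_k E k x \<inter> bdry_k E k (xs ! (is ! 0))
      \<and> (\<forall>j. 1 \<le> j \<and> j \<le> l - 1 \<longrightarrow>
             cs ! j \<in> ball_k E k (xs ! (is ! (j - 1))) \<inter> bdry_k E k (xs ! (is ! j)))
      \<and> cs ! l \<in> ball_k E k (xs ! (is ! (l - 1))) \<inter> ball_k E k y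
      \<and> (\<forall>j. 1 \<le> j \<and> j \<le> l \<longrightarrow> (cs ! (j - 1), cs ! j) \<in> Xi E p k (xs ! (is ! (j - 1)))))"

definition Xi_path :: "('v \<Rightarrow> 'v \<Rightarrow> bool) \<Rightarrow> ('v \<Rightarrow> 'v \<Rightarrow> real) \<Rightarrow> nat \<Rightarrow> 'v \<Rightarrow> 'v \<Rightarrow> 'v list set" where
  "Xi_path E p k x y = {cs. \<exists>is. Xi_path_idx E p k x y cs is}"

definition path_index :: "('v \<Rightarrow> 'v \<Rightarrow> bool) \<Rightarrow> nat \<Rightarrow> 'v \<Rightarrow> 'v \<Rightarrow> 'v list \<Rightarrow> nat \<Rightarrow> nat" where
  "path_index E k x y cs s =
     (let xs = geod E x y; m = length xs - 1 in
        Suc (Max {i. i \<le> m \<and> cs ! (s - 1) \<in> ball_k E k (xs ! i)}))"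

definition J_path :: "('v \<Rightarrow> 'v \<Rightarrow> bool) \<Rightarrow> ('v \<Rightarrow> 'v \<Rightarrow> real) \<Rightarrow> nat
                      \<Rightarrow> ('v \<times> 'v \<times> 'v \<Rightarrow> complex) \<Rightarrow> 'v \<Rightarrow> 'v \<Rightarrow> 'v \<Rightarrow> 'v \<Rightarrow> complex" where
  "J_path E p k J x y c b =
     (\<Sum>cs\<in>{cs \<in> Xi_path E p k x y. hd cs = c \<and> last cs = b}.
        \<Prod>j\<in>{1..length cs - 1}.
          J (cs ! (j - 1), cs ! j, geod E x y ! path_index E k x y cs j))"

definition psi :: "('v \<Rightarrow> 'v \<Rightarrow> bool) \<Rightarrow> ('v \<Rightarrow> 'v \<Rightarrow> real) \<Rightarrow> nat
                   \<Rightarrow> ('v \<times> 'v \<times> 'v \<Rightarrow> complex) \<Rightarrow> 'v \<times> 'v \<times> 'v \<Rightarrow> complex" where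
  "psi E p k J = (\<lambda>(a, b, y). complex_of_real (p a b)
      + (\<Sum>\<^sub>\<infinity>c\<in>- ball_k E k y. complex_of_real (p a c) * J_path E p k J c y c b))"

end

theory Submission
  imports Defs
begin

(*
  Splitting off the first step of a walk from a \<in> \<partial>B(y) gives
    G_z(a,b;B(y)^c) = z p(a,b) + \<Sum>_c z p(a,c) G_z(c,b;B(y)^c),
  so it suffices to show J_[c,y](c,b) = G_z(c,b;B(y)^c) for J = v_z and c \<notin> B(y).
  Let i be the index of the first ball B(x_i) along [c,y] = (x_0,...,x_m) that does not
  contain c after the last one that does. The edge x_{i-1} x_i separates the tree, c lies on
  the side of x_{i-1}, and B(y) meets that side only inside B(x_i); as p has range k, a walk
  from c must enter B(x_i) before it can reach B(y). Decomposing at this first entrance,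
    G_z(c,b;B(y)^c) = \<Sum>_{c'} G_z(c,c';B(x_i)^c) G_z(c',b;B(y)^c),
  where the first factor is v_z((c,c')_{x_i}) and c' has a strictly larger index. Iterating
  (induction on m - i) expands G_z(c,b;B(y)^c) into a sum over chains c = c_0, c_1, ..., c_l = b,
  and quasi-convexity of distances along geodesics in a tree identifies these chains and their
  indices with the elements of \<Xi>_[c,y] and the indices i_s of the paper.
*)

subsection \<open>Distance and geodesics in connected graphs\<close>

lemma walk_iff_successively: "walk E ws \<longleftrightarrow> ws \<noteq> [] \<and> successively E ws"
  by (simp add: walk_def successively_conv_nth)

lemma walk_remove_loops:
  "walk E ws \<Longrightarrow> \<exists>ps. walk E ps \<and> distinct ps \<and> hd ps = hd ws \<and> last ps = last ws \<and> set ps \<subseteq> set ws"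
proof (induction "length ws" arbitrary: ws rule: less_induct)
  case less
  show ?case
  proof (cases "distinct ws")
    case False
    then obtain xs y ys zs where ws: "ws = xs @ y # ys @ y # zs"
      using not_distinct_decomp[OF False] by auto
    let ?vs = "xs @ y # zs"
    have "walk E ?vs"
      using less.prems unfolding ws
      by (auto simp: walk_iff_successively successively_append_iff successively_Cons)
    moreover have "length ?vs < length ws"
      using ws by simp
    ultimately obtain ps where ps: "walk E ps" "distinct ps" "hd ps = hd ?vs" "last ps = last ?vs"
        "set ps \<subseteq> set ?vs"
      using less.hyps by blast
    moreover have "hd ?vs = hd ws" "last ?vs = last ws"
      using ws by (cases xs; cases zs; simp)+
    moreover have "set ?vs \<subseteq> set ws"
      using ws by auto
    ultimately show ?thesis
      using ps by (intro exI[of _ ps]) auto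
  qed (use less.prems in blast)
qed

locale connected_graph =
  fixes E :: "'v \<Rightarrow> 'v \<Rightarrow> bool"
  assumes adj_sym: "E x y \<Longrightarrow> E y x"
    and adj_irrefl: "\<not> E x x"
    and walk_exists: "\<exists>ws. walk E ws \<and> hd ws = x \<and> last ws = y"
begin

abbreviation d where "d \<equiv> gdist E"

lemma shortest_walk_exists: "\<exists>ws. walk E ws \<and> hd ws = x \<and> last ws = y \<and> length ws = Suc (d x y)"
proof -
  obtain ws where ws: "walk E ws" "hd ws = x" "last ws = y"
    using walk_exists by blast
  then have "\<exists>n ws. walk E ws \<and> hd ws = x \<and> last ws = y \<and> length ws = Suc n"
    by (intro exI[of _ "length ws - 1"] exI[of _ ws]) (auto simp: walk_def)
  then show ?thesis
    unfolding gdist_def by (rule LeastI_ex)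
qed

lemma gdist_le_walk: "walk E ws \<Longrightarrow> hd ws = x \<Longrightarrow> last ws = y \<Longrightarrow> d x y \<le> length ws - 1"
  unfolding gdist_def by (rule Least_le) (auto simp: walk_def)

lemma walk_append_tl:
  assumes "walk E xs" "walk E ys" "last xs = hd ys"
  shows "walk E (xs @ tl ys)"
proof -
  have ys: "ys = hd ys # tl ys"
    using assms(2) by (simp add: walk_def)
  then have "successively E (hd ys # tl ys)"
    using assms(2) by (metis walk_iff_successively)
  then show ?thesis
    using assms by (cases "tl ys") (auto simp: walk_iff_successively successively_append_iff)
qed

lemma walk_rev: "walk E xs \<Longrightarrow> walk E (rev xs)"
  by (auto simp: walk_iff_successively intro: successively_mono adj_sym)

lemma gdist_triangle: "d x z \<le> d x y + d y z"
proof -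
  obtain xs where xs: "walk E xs" "hd xs = x" "last xs = y" "length xs = Suc (d x y)"
    using shortest_walk_exists by blast
  obtain ys where ys: "walk E ys" "hd ys = y" "last ys = z" "length ys = Suc (d y z)"
    using shortest_walk_exists by blast
  have "hd (xs @ tl ys) = x"
    using xs by (cases xs) auto
  moreover have "last (xs @ tl ys) = z"
  proof (cases "tl ys = []")
    case True
    then have "ys = [y]"
      using ys by (cases ys) (auto simp: walk_def)
    then show ?thesis
      using True xs ys by simp
  next
    case False
    then show ?thesis
      using ys by (simp add: last_tl)
  qed
  ultimately have "d x z \<le> length (xs @ tl ys) - 1"
    using gdist_le_walk[OF walk_append_tl[OF xs(1) ys(1)]] xs(3) ys(2) by simp
  then show ?thesis
    using xs ys by auto
qed

lemma gdist_commute: "d x y = d y x"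
proof -
  have le: "d x y \<le> d y x" for x y
  proof -
    obtain xs where xs: "walk E xs" "hd xs = y" "last xs = x" "length xs = Suc (d y x)"
      using shortest_walk_exists by blast
    then show ?thesis
      using gdist_le_walk[of "rev xs" x y] walk_rev by (auto simp: hd_rev last_rev)
  qed
  show ?thesis
    using le[of x y] le[of y x] by simp
qed

lemma gdist_self [simp]: "d x x = 0"
  using gdist_le_walk[of "[x]" x x] by (simp add: walk_def)

lemma gdist_eq_0_iff [simp]: "d x y = 0 \<longleftrightarrow> x = y"
proof
  assume "d x y = 0"
  then obtain xs where "walk E xs" "hd xs = x" "last xs = y" "length xs = 1"
    using shortest_walk_exists by force
  then show "x = y"
    by (cases xs) auto
qed simp

lemma gdist_adj: "E x y \<Longrightarrow> d x y = 1"
proof -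
  assume xy: "E x y"
  then have "d x y \<le> 1"
    using gdist_le_walk[of "[x, y]" x y] by (auto simp: walk_def nth_Cons split: nat.splits)
  moreover have "x \<noteq> y"
    using xy adj_irrefl by auto
  ultimately show ?thesis
    using gdist_eq_0_iff[of x y] by linarith
qed

lemma adj_if_gdist_1: "d x y = 1 \<Longrightarrow> E x y"
proof -
  assume "d x y = 1"
  then obtain xs where xs: "walk E xs" "hd xs = x" "last xs = y" "length xs = 2"
    using shortest_walk_exists by force
  then obtain a b where "xs = [a, b]"
    by (cases xs; cases "tl xs") auto
  then show ?thesis
    using xs by (auto simp: walk_def)
qed

lemma gdist_adj_le: "E x y \<Longrightarrow> d u x \<le> d u y + 1"
  using gdist_triangle[of u x y] gdist_adj[of y x] adj_sym gdist_commute by fastforce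

definition geodesic :: "'v list \<Rightarrow> bool" where
  "geodesic ws \<longleftrightarrow> walk E ws \<and> length ws = Suc (d (hd ws) (last ws))"

lemma geodesic_exists: "\<exists>ws. geodesic ws \<and> hd ws = x \<and> last ws = y"
  using shortest_walk_exists[of x y] by (auto simp: geodesic_def)

lemma gdist_walk_nth_le:
  assumes "walk E ws" "i \<le> j" "j < length ws"
  shows "d (ws ! i) (ws ! j) \<le> j - i"
proof -
  let ?vs = "take (Suc (j - i)) (drop i ws)"
  have len: "length ?vs = Suc (j - i)"
    using assms by auto
  have nth: "t < Suc (j - i) \<Longrightarrow> ?vs ! t = ws ! (i + t)" for t
    using assms by auto
  have "walk E ?vs"
    unfolding walk_def
  proof (intro conjI allI impI)
    show "?vs \<noteq> []"
      using len by auto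
    fix t
    assume t: "Suc t < length ?vs"
    then have "E (ws ! (i + t)) (ws ! Suc (i + t))"
      using assms len unfolding walk_def by auto
    then show "E (?vs ! t) (?vs ! Suc t)"
      using nth[of t] nth[of "Suc t"] t len by simp
  qed
  moreover have "hd ?vs = ws ! i" "last ?vs = ws ! j"
    using nth[of 0] nth[of "j - i"] len assms by (simp_all add: hd_conv_nth last_conv_nth)
  ultimately show ?thesis
    using gdist_le_walk len by fastforce
qed

lemma geodesic_gdist_nth:
  assumes g: "geodesic ws" and ij: "i \<le> j" "j < length ws"
  shows "d (ws ! i) (ws ! j) = j - i"
proof -
  have w: "walk E ws" and len: "length ws = Suc (d (hd ws) (last ws))"
    using g by (auto simp: geodesic_def)
  have ne: "ws \<noteq> []"
    using w by (simp add: walk_def)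
  have "d (hd ws) (last ws) \<le> d (hd ws) (ws ! i) + d (ws ! i) (ws ! j) + d (ws ! j) (last ws)"
    using gdist_triangle[of "hd ws" "last ws" "ws ! i"] gdist_triangle[of "ws ! i" "last ws" "ws ! j"]
    by linarith
  moreover have "d (hd ws) (ws ! i) \<le> i"
    using gdist_walk_nth_le[OF w, of 0 i] ij ne by (simp add: hd_conv_nth)
  moreover have "d (ws ! j) (last ws) \<le> length ws - 1 - j"
    using gdist_walk_nth_le[OF w, of j "length ws - 1"] ij ne by (simp add: last_conv_nth)
  moreover have "d (ws ! i) (ws ! j) \<le> j - i"
    using gdist_walk_nth_le[OF w] ij by auto
  ultimately show ?thesis
    using len ij by linarith
qed

lemma geodesic_distinct: "geodesic ws \<Longrightarrow> distinct ws"
  unfolding distinct_conv_nth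
proof (intro allI impI)
  fix i j
  assume "geodesic ws" "i < length ws" "j < length ws" "i \<noteq> j"
  then show "ws ! i \<noteq> ws ! j"
    using geodesic_gdist_nth[of ws i j] geodesic_gdist_nth[of ws j i] by (cases "i \<le> j") auto
qed

lemma geodesic_mem_gdist:
  assumes g: "geodesic G" and v: "v \<in> set G"
  shows "d (hd G) v \<le> d (hd G) (last G)" "d (hd G) v = d (hd G) (last G) \<Longrightarrow> v = last G"
proof -
  obtain j where j: "j < length G" "G ! j = v"
    using v by (auto simp: in_set_conv_nth)
  have ne: "G \<noteq> []" and len: "length G = Suc (d (hd G) (last G))"
    using j g by (auto simp: geodesic_def)
  have dv: "d (hd G) v = j"
    using geodesic_gdist_nth[OF g, of 0 j] j ne by (simp add: hd_conv_nth)
  then show "d (hd G) v \<le> d (hd G) (last G)"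
    using j len by linarith
  show "v = last G" if "d (hd G) v = d (hd G) (last G)"
  proof -
    have "j = length G - 1"
      using that dv len by linarith
    then show ?thesis
      using j ne by (simp add: last_conv_nth)
  qed
qed

end

subsection \<open>Trees\<close>

locale tree_graph =
  fixes E :: "'v \<Rightarrow> 'v \<Rightarrow> bool"
  assumes tree: "is_tree E"
begin

sublocale connected_graph
  using tree by unfold_locales (auto simp: is_tree_def)

lemma no_cycle: "\<not> is_cycle E ws"
  using tree by (auto simp: is_tree_def)

lemma walk_to_neighbour_first_step:
  assumes ab: "E a b" and w: "walk E (a # ws)" and last: "last (a # ws) = b" and a: "a \<notin> set ws"
  shows "hd ws = b"
proof (rule ccontr)
  assume hd: "hd ws \<noteq> b"
  have ws: "ws \<noteq> []"
    using last ab adj_irrefl by auto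
  then have "walk E ws" "E a (hd ws)"
    using w by (auto simp: walk_iff_successively successively_Cons)
  then obtain S where S: "walk E S" "distinct S" "hd S = hd ws" "last S = b" "set S \<subseteq> set ws"
    using walk_remove_loops last ws by fastforce
  have "S \<noteq> []"
    using S by (simp add: walk_def)
  moreover have "length S \<noteq> 1"
    using S hd by (cases S) auto
  ultimately have "2 \<le> length S"
    by (cases S) (auto simp: Suc_le_eq)
  then have "is_cycle E (a # S)"
    using S \<open>S \<noteq> []\<close> \<open>E a (hd ws)\<close> a adj_sym[OF ab]
    by (auto simp: is_cycle_def walk_iff_successively successively_Cons)
  then show False
    using no_cycle by blast
qed

text \<open>Reversing a geodesic from \<open>u\<close> to \<open>a\<close> and continuing along \<open>uw\<close> and a geodesic
  from \<open>w\<close> to \<open>b\<close> gives a walk from \<open>a\<close> to \<open>b\<close> that never returns to \<open>a\<close>; it starts with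
  the edge \<open>ab\<close>, while \<open>b\<close> does not lie on the first geodesic.\<close>

lemma edge_crossing_unique:
  assumes ab: "E a b" and u: "d u a < d u b" and w: "d w b \<le> d w a" and uw: "E u w"
  shows "u = a \<and> w = b"
proof -
  obtain G1 where G1: "geodesic G1" "hd G1 = u" "last G1 = a"
    using geodesic_exists by blast
  obtain G2 where G2: "geodesic G2" "hd G2 = w" "last G2 = b"
    using geodesic_exists by blast
  have "G1 \<noteq> []" "G2 \<noteq> []"
    using G1 G2 by (auto simp: geodesic_def walk_def)
  then obtain R where R: "rev G1 = a # R"
    using G1 by (cases "rev G1") (auto simp flip: last_rev)
  have b1: "b \<notin> set G1"
    using geodesic_mem_gdist(1)[OF G1(1)] G1 u by fastforce
  have a2: "a \<notin> set G2"
    using geodesic_mem_gdist[OF G2(1)] G2 w ab adj_irrefl by fastforce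
  have "a \<notin> set R"
    using geodesic_distinct[OF G1(1)] R by (metis distinct.simps(2) distinct_rev)
  moreover have "walk E (a # R @ G2)"
  proof -
    have "successively E (rev G1)" "successively E G2"
      using G1(1) G2(1) walk_rev by (auto simp: geodesic_def walk_iff_successively)
    moreover have "last (a # R) = u"
      using G1 R by (metis last_rev)
    ultimately have "successively E ((a # R) @ G2)"
      unfolding successively_append_iff using R uw \<open>G2 \<noteq> []\<close> G2 by auto
    then show ?thesis
      by (simp add: walk_iff_successively)
  qed
  moreover have "last (a # R @ G2) = b"
    using G2 \<open>G2 \<noteq> []\<close> by simp
  ultimately have "hd (R @ G2) = b"
    using walk_to_neighbour_first_step[OF ab] a2 by auto
  show ?thesis
  proof (cases R)
    case Nil
    then have "G1 = [a]"
      using R by simp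
    then show ?thesis
      using Nil G1(2) G2(2) \<open>hd (R @ G2) = b\<close> by simp
  next
    case (Cons r R')
    then have "b \<in> set (rev G1)"
      using R \<open>hd (R @ G2) = b\<close> by simp
    then show ?thesis
      using b1 by simp
  qed
qed

text \<open>The first edge of a geodesic from \<open>u\<close> to \<open>w\<close> that leaves the \<open>a\<close>-side of \<open>ab\<close>
  must be \<open>ab\<close> itself, by \<open>edge_crossing_unique\<close>.\<close>

lemma gdist_across_edge:
  assumes ab: "E a b" and u: "d u a < d u b" and w: "d w b \<le> d w a"
  shows "d u w = d u a + 1 + d b w"
proof -
  obtain P where P: "geodesic P" "hd P = u" "last P = w"
    using geodesic_exists by blast
  have ne: "P \<noteq> []"
    using P by (auto simp: geodesic_def walk_def)
  define n where "n = length P - 1"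
  have len: "length P = Suc n"
    using ne by (simp add: n_def)
  define near_a where "near_a i \<longleftrightarrow> d (P ! i) a < d (P ! i) b" for i
  have "near_a 0" "\<not> near_a n"
    using P ne u w len by (simp_all add: near_a_def hd_conv_nth last_conv_nth)
  define j where "j = (LEAST j. \<not> near_a j)"
  have j: "\<not> near_a j" "j \<le> n"
    unfolding j_def using LeastI[of "\<lambda>j. \<not> near_a j" n] Least_le[of "\<lambda>j. \<not> near_a j" n] \<open>\<not> near_a n\<close>
    by auto
  have j0: "j > 0"
    using \<open>near_a 0\<close> j by (cases j) auto
  have "near_a (j - 1)"
    using not_less_Least[of "j - 1" "\<lambda>j. \<not> near_a j"] j0 unfolding j_def by auto
  moreover have "E (P ! (j - 1)) (P ! j)"
    using P(1) j j0 len unfolding geodesic_def walk_def by (metis Suc_diff_1 le_imp_less_Suc)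
  ultimately have "P ! (j - 1) = a \<and> P ! j = b"
    using edge_crossing_unique[OF ab, of "P ! (j - 1)" "P ! j"] j(1) by (simp add: near_a_def not_less)
  moreover have "d u (P ! (j - 1)) = j - 1"
    using geodesic_gdist_nth[OF P(1), of 0 "j - 1"] P ne j len by (simp add: hd_conv_nth)
  moreover have "d (P ! j) w = n - j"
    using geodesic_gdist_nth[OF P(1), of j n] P ne j len by (simp add: last_conv_nth)
  moreover have "d u w = n"
    using P len by (simp add: geodesic_def)
  ultimately show ?thesis
    using j0 j by auto
qed

lemma gdist_endpoint_le_across_edge:
  assumes ab: "E a b" and u: "d u a < d u b" and w: "d w b \<le> d w a"
  shows "d u b \<le> d u w" "d w b \<le> d u w"
  using gdist_across_edge[OF assms] gdist_adj_le[OF adj_sym[OF ab], of u] gdist_commute[of b w]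
  by linarith+

lemma adj_towards_unique:
  assumes e1: "E v w1" and e2: "E v w2" and eq: "d w1 y = d w2 y" and v: "d v y = Suc (d w1 y)"
  shows "w1 = w2"
proof (rule ccontr)
  assume ne: "w1 \<noteq> w2"
  have "d w2 v = 1"
    using gdist_adj[OF adj_sym[OF e2]] .
  show False
  proof (cases "d w2 v < d w2 w1")
    case True
    have "d y w1 \<le> d y v"
      using v gdist_commute[of y w1] gdist_commute[of y v] by simp
    then have "d w2 y = d w2 v + 1 + d w1 y"
      using gdist_across_edge[OF e1 True] by simp
    then show False
      using eq \<open>d w2 v = 1\<close> by simp
  next
    case False
    then have "E w2 w1"
      using \<open>d w2 v = 1\<close> ne adj_if_gdist_1 gdist_eq_0_iff[of w2 w1] by (metis le_antisym less_one not_le)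
    then have "is_cycle E [v, w1, w2]"
      using e1 e2 ne adj_sym adj_irrefl
      by (auto simp: is_cycle_def walk_def nth_Cons split: nat.splits)
    then show False
      using no_cycle by blast
  qed
qed

lemma geodesic_unique:
  assumes gx: "geodesic xs" and gy: "geodesic ys" and hd: "hd xs = hd ys" and last: "last xs = last ys"
  shows "xs = ys"
proof -
  define y where "y = last xs"
  define m where "m = d (hd xs) y"
  have lx: "length xs = Suc m" and ly: "length ys = Suc m"
    using gx gy hd last by (simp_all add: geodesic_def m_def y_def)
  have nx: "xs \<noteq> []" and ny: "ys \<noteq> []"
    using lx ly by auto
  have dx: "d (xs ! i) y = m - i" and dy: "d (ys ! i) y = m - i" if "i \<le> m" for i
    using geodesic_gdist_nth[OF gx, of i m] geodesic_gdist_nth[OF gy, of i m] that lx ly nx ny last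
    by (simp_all add: y_def last_conv_nth)
  have "i < Suc m \<Longrightarrow> xs ! i = ys ! i" for i
  proof (induction i)
    case 0
    then show ?case
      using hd nx ny by (simp add: hd_conv_nth)
  next
    case (Suc i)
    show ?case
    proof (rule adj_towards_unique)
      show "E (xs ! i) (xs ! Suc i)"
        using gx Suc.prems lx by (simp add: geodesic_def walk_def)
      have "E (ys ! i) (ys ! Suc i)"
        using gy Suc.prems ly by (simp add: geodesic_def walk_def)
      then show "E (xs ! i) (ys ! Suc i)"
        using Suc by simp
      show "d (xs ! Suc i) y = d (ys ! Suc i) y" "d (xs ! i) y = Suc (d (xs ! Suc i) y)"
        using dx[of "Suc i"] dy[of "Suc i"] dx[of i] Suc.prems by simp_all
    qed
  qed
  then show ?thesis
    using lx ly by (intro nth_equalityI) auto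
qed

lemma geod_geodesic: "geodesic (geod E x y) \<and> hd (geod E x y) = x \<and> last (geod E x y) = y"
proof -
  have "\<exists>!ws. walk E ws \<and> hd ws = x \<and> last ws = y \<and> length ws = Suc (d x y)"
    using shortest_walk_exists geodesic_unique unfolding geodesic_def by (metis (no_types, lifting))
  then have "walk E (geod E x y) \<and> hd (geod E x y) = x \<and> last (geod E x y) = y
      \<and> length (geod E x y) = Suc (d x y)"
    unfolding geod_def by (rule theI')
  then show ?thesis
    by (auto simp: geodesic_def)
qed

lemma length_geod: "length (geod E x y) = Suc (d x y)"
  using geod_geodesic[of x y] by (simp add: geodesic_def)

lemma geod_nth_0: "geod E x y ! 0 = x"
  using geod_geodesic[of x y] length_geod[of x y] by (metis hd_conv_nth list.size(3) nat.distinct(1))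

lemma geod_nth_gdist: "geod E x y ! d x y = y"
  using geod_geodesic[of x y] length_geod[of x y] by (metis diff_Suc_1 last_conv_nth list.size(3) nat.distinct(1))

lemma gdist_geod_nth: "i \<le> j \<Longrightarrow> j \<le> d x y \<Longrightarrow> d (geod E x y ! i) (geod E x y ! j) = j - i"
  using geod_geodesic[of x y] geodesic_gdist_nth length_geod by (metis le_imp_less_Suc)

lemma geod_adj: "i < d x y \<Longrightarrow> E (geod E x y ! i) (geod E x y ! Suc i)"
  using geod_geodesic[of x y] length_geod[of x y] unfolding geodesic_def walk_def by (metis Suc_mono)

lemma gdist_geodesic_no_local_max:
  assumes g: "geodesic xs" and j: "0 < j" "Suc j < length xs"
  shows "d u (xs ! j) < max (d u (xs ! (j - 1))) (d u (xs ! Suc j))"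
proof (rule ccontr)
  let ?a = "xs ! (j - 1)" and ?b = "xs ! j" and ?c = "xs ! Suc j"
  assume "\<not> ?thesis"
  then have ab: "d u ?a \<le> d u ?b" and cb: "d u ?c \<le> d u ?b"
    by auto
  have "E ?b ?c"
    using g j by (simp add: geodesic_def walk_def)
  moreover have "d ?a ?b = 1" "d ?a ?c = 2"
    using geodesic_gdist_nth[OF g, of "j - 1" j] geodesic_gdist_nth[OF g, of "j - 1" "Suc j"] j by simp_all
  ultimately have "d ?a u = d ?a ?b + 1 + d ?c u"
    using gdist_across_edge[of ?b ?c ?a u] cb by simp
  moreover have "d u ?b \<le> d u ?c + 1"
    using gdist_adj_le[OF \<open>E ?b ?c\<close>] .
  ultimately show False
    using ab \<open>d ?a ?b = 1\<close> gdist_commute[of u ?a] gdist_commute[of u ?c] by linarith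
qed

lemma gdist_geodesic_quasiconvex:
  assumes g: "geodesic xs" and ijl: "i < j" "j < l" "l < length xs"
  shows "d u (xs ! j) < max (d u (xs ! i)) (d u (xs ! l))"
proof (rule ccontr)
  define f where "f s = d u (xs ! s)" for s
  assume "\<not> ?thesis"
  then have fi: "f i \<le> f j" and fl: "f l \<le> f j"
    by (auto simp: f_def)
  obtain t where t: "t \<in> {i<..<l}" "f t = Max (f ` {i<..<l})"
    using Max_in[of "f ` {i<..<l}"] ijl by fastforce
  have tmax: "s \<in> {i<..<l} \<Longrightarrow> f s \<le> f t" for s
    using t by simp
  have "f j \<le> f t"
    using tmax ijl by simp
  have "f (t - 1) \<le> f t"
  proof (cases "t - 1 = i")
    case False
    then show ?thesis
      using t(1) by (intro tmax) auto
  qed (use fi \<open>f j \<le> f t\<close> in simp)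
  moreover have "f (Suc t) \<le> f t"
  proof (cases "Suc t = l")
    case False
    then show ?thesis
      using t(1) by (intro tmax) auto
  qed (use fl \<open>f j \<le> f t\<close> in simp)
  moreover have "f t < max (f (t - 1)) (f (Suc t))"
    unfolding f_def using gdist_geodesic_no_local_max[OF g] t ijl by simp
  ultimately show False
    by linarith
qed

end

subsection \<open>Walks and Green functions\<close>

definition lists_length :: "nat \<Rightarrow> 'a set \<Rightarrow> 'a list set" where
  "lists_length n X = {ws. length ws = n \<and> set ws \<subseteq> X}"

lemma finite_lists_length: "finite X \<Longrightarrow> finite (lists_length n X)"
  unfolding lists_length_def using finite_lists_length_eq[of X n] by (simp add: conj_commute)

lemma lists_length_Suc: "lists_length (Suc n) X = (\<lambda>(c, ws). c # ws) ` (X \<times> lists_length n X)"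
proof
  show "lists_length (Suc n) X \<subseteq> (\<lambda>(c, ws). c # ws) ` (X \<times> lists_length n X)"
  proof
    fix ws
    assume "ws \<in> lists_length (Suc n) X"
    then obtain c ws' where "ws = c # ws'" "c \<in> X" "ws' \<in> lists_length n X"
      by (cases ws) (auto simp: lists_length_def)
    then show "ws \<in> (\<lambda>(c, ws). c # ws) ` (X \<times> lists_length n X)"
      by force
  qed
qed (auto simp: lists_length_def)

lemma sum_lists_length_Suc:
  assumes "finite X"
  shows "sum g (lists_length (Suc n) X) = (\<Sum>c\<in>X. \<Sum>ws\<in>lists_length n X. g (c # ws))"
proof -
  have "inj_on (\<lambda>(c, ws). c # ws) (X \<times> lists_length n X)"
    by (auto simp: inj_on_def)
  then have "sum g (lists_length (Suc n) X) = sum (g \<circ> (\<lambda>(c, ws). c # ws)) (X \<times> lists_length n X)"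
    unfolding lists_length_Suc by (rule sum.reindex)
  also have "\<dots> = (\<Sum>c\<in>X. \<Sum>ws\<in>lists_length n X. g (c # ws))"
    unfolding sum.cartesian_product' comp_def by (simp add: case_prod_beta)
  finally show ?thesis .
qed

locale tree_kernel = tree_graph E for E :: "'v \<Rightarrow> 'v \<Rightarrow> bool" +
  fixes p :: "'v \<Rightarrow> 'v \<Rightarrow> real" and k :: nat
  assumes bounded_valence: "bounded_valence E"
    and kernel: "transition_kernel p"
    and range: "\<forall>x y. gdist E x y > k \<longrightarrow> p x y = 0"
begin

abbreviation kball where "kball a \<equiv> ball_k E k a"
abbreviation P where "P n \<Omega> a b \<equiv> pn p n \<Omega> a b"
abbreviation G where "G z a b \<Omega> \<equiv> Gz p z a b \<Omega>"

lemma p_nonneg: "0 \<le> p x y"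
  using kernel by (simp add: transition_kernel_def)

lemma p_eq_0_outside_kball: "y \<notin> kball x \<Longrightarrow> p x y = 0"
  using range by (auto simp: ball_k_def)

lemma mem_kball_iff: "c \<in> kball w \<longleftrightarrow> d c w \<le> k"
  using gdist_commute by (simp add: ball_k_def)

lemma mem_bdry_k_iff: "c \<in> bdry_k E k w \<longleftrightarrow> d c w = Suc k"
  using gdist_commute by (simp add: bdry_k_def)

lemma Xi_gdist: "(a, b) \<in> Xi E p k w \<Longrightarrow> d a w = Suc k \<and> d b w \<le> k"
  by (simp add: Xi_def mem_kball_iff mem_bdry_k_iff)

lemma finite_ball_k: "finite (ball_k E r x)"
proof (induction r)
  case 0
  have "ball_k E 0 x = {x}"
    by (auto simp: ball_k_def)
  then show ?case
    by simp
next
  case (Suc r)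
  have "ball_k E (Suc r) x \<subseteq> ball_k E r x \<union> (\<Union>u\<in>ball_k E r x. {w. E u w})"
  proof
    fix w
    assume "w \<in> ball_k E (Suc r) x"
    then consider "d x w \<le> r" | "d x w = Suc r"
      by (fastforce simp: ball_k_def)
    then show "w \<in> ball_k E r x \<union> (\<Union>u\<in>ball_k E r x. {w. E u w})"
    proof cases
      case 2
      then have "E (geod E x w ! r) w" "d x (geod E x w ! r) = r"
        using geod_adj[of r x w] geod_nth_gdist[of x w] gdist_geod_nth[of 0 r x w] geod_nth_0 by simp_all
      then show ?thesis
        by (auto simp: ball_k_def)
    qed (simp add: ball_k_def)
  qed
  moreover have "finite {w. E u w}" for u
    using bounded_valence by (auto simp: bounded_valence_def)
  ultimately show ?case
    using Suc finite_subset by blast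
qed

lemma sum_p_le_1:
  assumes "finite F"
  shows "(\<Sum>c\<in>F. p a c) \<le> 1"
proof -
  have "(p a has_sum 1) UNIV"
    using kernel by (simp add: transition_kernel_def)
  then show ?thesis
    by (rule has_sum_mono_neutral[OF has_sum_finite[OF assms]]) (auto simp: p_nonneg)
qed

definition path_weight :: "'v \<Rightarrow> 'v \<Rightarrow> 'v list \<Rightarrow> real" where
  "path_weight a b ws = prod_list (map2 p (a # ws) (ws @ [b]))"

lemma path_weight_Cons: "path_weight a b (c # ws) = p a c * path_weight c b ws"
  by (simp add: path_weight_def)

lemma path_weight_nonzero_ball:
  "path_weight a b ws \<noteq> 0 \<Longrightarrow> set ws \<subseteq> ball_k E (length ws * k) a"
proof (induction ws arbitrary: a)
  case (Cons c ws)
  then have "d a c \<le> k" "set ws \<subseteq> ball_k E (length ws * k) c"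
    using range p_eq_0_outside_kball by (auto simp: path_weight_Cons ball_k_def)
  show ?case
  proof
    fix w
    assume "w \<in> set (c # ws)"
    then have "d c w \<le> length ws * k"
      using Cons.IH \<open>set ws \<subseteq> ball_k E (length ws * k) c\<close> by (auto simp: ball_k_def)
    then show "w \<in> ball_k E (length (c # ws) * k) a"
      using gdist_triangle[of a w c] \<open>d a c \<le> k\<close> by (simp add: ball_k_def)
  qed
qed simp

text \<open>Since \<open>p\<close> has range \<open>k\<close>, only the finitely many words inside the ball of radius
  \<open>n k\<close> around \<open>a\<close> contribute to the infinite sum defining \<open>p\<^sup>(\<^sup>n\<^sup>+\<^sup>1\<^sup>)\<close>; in particular that
  sum is not the junk value of a non-summable \<open>infsum\<close>.\<close>

lemma pn_Suc_eq_sum_lists: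
  assumes Y: "finite Y" "Y \<subseteq> \<Omega>" "\<Omega> \<inter> ball_k E (n * k) a \<subseteq> Y"
  shows "P (Suc n) \<Omega> a b = (\<Sum>ws\<in>lists_length n Y. path_weight a b ws)"
proof -
  have "P (Suc n) \<Omega> a b = infsum (path_weight a b) (lists_length n \<Omega>)"
    unfolding pn_def lists_length_def path_weight_def[abs_def] by simp
  also have "\<dots> = infsum (path_weight a b) (lists_length n Y)"
    using Y path_weight_nonzero_ball[of a b] by (intro infsum_cong_neutral) (auto simp: lists_length_def, blast)
  also have "\<dots> = (\<Sum>ws\<in>lists_length n Y. path_weight a b ws)"
    using finite_lists_length[OF Y(1)] by simp
  finally show ?thesis .
qed

lemma pn_0: "P 0 \<Omega> a b = (if a = b then 1 else 0)"
  by (simp add: pn_def)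

lemma pn_1: "P (Suc 0) \<Omega> a b = p a b"
proof -
  have "{ws. length ws = 0 \<and> set ws \<subseteq> \<Omega>} = {[]}"
    by auto
  then show ?thesis
    by (simp add: pn_def)
qed

lemma pn_Suc_Suc: "P (Suc (Suc n)) \<Omega> a b = (\<Sum>c\<in>\<Omega> \<inter> kball a. p a c * P (Suc n) \<Omega> c b)"
proof -
  define X where "X = \<Omega> \<inter> ball_k E (Suc n * k) a"
  have X: "finite X" "X \<subseteq> \<Omega>" "kball a \<inter> \<Omega> \<subseteq> X"
    using finite_ball_k by (auto simp: X_def ball_k_def)
  have P_c: "P (Suc n) \<Omega> c b = (\<Sum>ws\<in>lists_length n X. path_weight c b ws)" if "c \<in> kball a" for c
    using that X
    by (intro pn_Suc_eq_sum_lists) (auto simp: X_def ball_k_def intro: order_trans[OF gdist_triangle add_mono])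
  have "P (Suc (Suc n)) \<Omega> a b = (\<Sum>c\<in>X. \<Sum>ws\<in>lists_length n X. path_weight a b (c # ws))"
    using X by (simp add: pn_Suc_eq_sum_lists[of X] sum_lists_length_Suc X_def)
  also have "\<dots> = (\<Sum>c\<in>X. p a c * (\<Sum>ws\<in>lists_length n X. path_weight c b ws))"
    by (simp add: path_weight_Cons sum_distrib_left)
  also have "\<dots> = (\<Sum>c\<in>\<Omega> \<inter> kball a. p a c * (\<Sum>ws\<in>lists_length n X. path_weight c b ws))"
    using X p_eq_0_outside_kball by (intro sum.mono_neutral_right) auto
  also have "\<dots> = (\<Sum>c\<in>\<Omega> \<inter> kball a. p a c * P (Suc n) \<Omega> c b)"
    using P_c by simp
  finally show ?thesis .
qed

lemma pn_nonneg_le_1: "0 \<le> P n \<Omega> a b \<and> P n \<Omega> a b \<le> 1"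
proof (induction n arbitrary: a rule: nat_less_induct)
  case (1 n)
  consider "n = 0" | "n = Suc 0" | m where "n = Suc (Suc m)"
    by (metis not0_implies_Suc)
  then show ?case
  proof cases
    case 3
    have "0 \<le> (\<Sum>c\<in>\<Omega> \<inter> kball a. p a c * P (Suc m) \<Omega> c b)"
      using 1 3 p_nonneg by (intro sum_nonneg) auto
    moreover have "(\<Sum>c\<in>\<Omega> \<inter> kball a. p a c * P (Suc m) \<Omega> c b) \<le> (\<Sum>c\<in>\<Omega> \<inter> kball a. p a c)"
      using 1 3 p_nonneg by (intro sum_mono) (simp add: mult_left_le)
    moreover have "(\<Sum>c\<in>\<Omega> \<inter> kball a. p a c) \<le> 1"
      using sum_p_le_1 finite_ball_k by simp
    ultimately show ?thesis
      using 3 by (simp add: pn_Suc_Suc)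
  qed (use p_nonneg sum_p_le_1[of "{b}"] in \<open>simp_all add: pn_0 pn_1\<close>)
qed

lemma pn_cong_invariant:
  assumes "Inv a"
    and step: "\<And>c c'. Inv c \<Longrightarrow> c' \<in> kball c \<Longrightarrow> (c' \<in> \<Omega>1 \<longleftrightarrow> c' \<in> \<Omega>2) \<and> (c' \<in> \<Omega>1 \<longrightarrow> Inv c')"
  shows "P n \<Omega>1 a b = P n \<Omega>2 a b"
  using assms(1)
proof (induction n arbitrary: a rule: nat_less_induct)
  case (1 n)
  consider "n = 0" | "n = Suc 0" | m where "n = Suc (Suc m)"
    by (metis not0_implies_Suc)
  then show ?case
  proof cases
    case 3
    have "\<Omega>1 \<inter> kball a = \<Omega>2 \<inter> kball a"
      using step[OF "1.prems"] by blast
    then show ?thesis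
      unfolding 3 pn_Suc_Suc using 1 3 step[OF "1.prems"] by (intro sum.cong) auto
  qed (simp_all add: pn_0 pn_1)
qed

lemma pn_eq_0_invariant:
  assumes "Inv a"
    and step: "\<And>c. Inv c \<Longrightarrow> c \<noteq> b \<and> p c b = 0 \<and> (\<forall>c'\<in>\<Omega> \<inter> kball c. Inv c')"
  shows "P n \<Omega> a b = 0"
  using assms(1)
proof (induction n arbitrary: a rule: nat_less_induct)
  case (1 n)
  consider "n = 0" | "n = Suc 0" | m where "n = Suc (Suc m)"
    by (metis not0_implies_Suc)
  then show ?case
  proof cases
    case 3
    then show ?thesis
      using 1 step[OF "1.prems"] by (auto simp: pn_Suc_Suc intro!: sum.neutral)
  qed (use step[OF "1.prems"] in \<open>simp_all add: pn_0 pn_1\<close>)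
qed

lemma sum_first_step_convolution:
  "(\<Sum>c\<in>\<Omega> \<inter> kball a. p a c * (\<Sum>c'\<in>C. \<Sum>j\<le>n. P (Suc j) \<Omega> c c' * f c' j))
     = (\<Sum>c'\<in>C. \<Sum>j\<le>n. P (Suc (Suc j)) \<Omega> a c' * f c' j)"
proof -
  have "(\<Sum>c\<in>\<Omega> \<inter> kball a. p a c * (\<Sum>c'\<in>C. \<Sum>j\<le>n. P (Suc j) \<Omega> c c' * f c' j))
      = (\<Sum>c\<in>\<Omega> \<inter> kball a. \<Sum>c'\<in>C. \<Sum>j\<le>n. p a c * P (Suc j) \<Omega> c c' * f c' j)"
    by (simp add: sum_distrib_left mult.assoc)
  also have "\<dots> = (\<Sum>c'\<in>C. \<Sum>j\<le>n. \<Sum>c\<in>\<Omega> \<inter> kball a. p a c * P (Suc j) \<Omega> c c' * f c' j)"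
    by (subst sum.swap) (simp only: sum.swap[of _ "\<Omega> \<inter> kball a"])
  finally show ?thesis
    by (simp add: pn_Suc_Suc sum_distrib_right)
qed

lemma pn_Suc_first_entrance:
  assumes A: "finite A" and a: "a \<notin> A" and b: "b \<notin> \<Omega>"
  shows "P (Suc n) \<Omega> a b = P (Suc n) (\<Omega> - A) a b
           + (\<Sum>c\<in>A \<inter> \<Omega>. \<Sum>j\<le>n. P (Suc j) (\<Omega> - A) a c * P (n - j) \<Omega> c b)"
  using a
proof (induction n arbitrary: a)
  case 0
  then show ?case
    using b by (auto simp: pn_1 pn_0 intro!: sum.neutral)
next
  case (Suc n)
  define B where "B = \<Omega> - A"
  define T where "T c = (\<Sum>c'\<in>A \<inter> \<Omega>. \<Sum>j\<le>n. P (Suc j) B c c' * P (n - j) \<Omega> c' b)" for c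
  have split: "\<Omega> \<inter> kball a = (B \<inter> kball a) \<union> (A \<inter> \<Omega> \<inter> kball a)"
    by (auto simp: B_def)
  have "P (Suc (Suc n)) \<Omega> a b
      = (\<Sum>c\<in>B \<inter> kball a. p a c * P (Suc n) \<Omega> c b) + (\<Sum>c\<in>A \<inter> \<Omega> \<inter> kball a. p a c * P (Suc n) \<Omega> c b)"
    unfolding pn_Suc_Suc split using finite_ball_k by (intro sum.union_disjoint) (auto simp: B_def)
  also have "(\<Sum>c\<in>B \<inter> kball a. p a c * P (Suc n) \<Omega> c b)
      = (\<Sum>c\<in>B \<inter> kball a. p a c * (P (Suc n) B c b + T c))"
    using Suc.IH by (intro sum.cong) (auto simp: B_def T_def)
  also have "\<dots> = P (Suc (Suc n)) B a b + (\<Sum>c'\<in>A \<inter> \<Omega>. \<Sum>j\<le>n. P (Suc (Suc j)) B a c' * P (n - j) \<Omega> c' b)"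
    unfolding T_def distrib_left sum.distrib sum_first_step_convolution by (simp add: pn_Suc_Suc)
  also have "(\<Sum>c\<in>A \<inter> \<Omega> \<inter> kball a. p a c * P (Suc n) \<Omega> c b) = (\<Sum>c\<in>A \<inter> \<Omega>. p a c * P (Suc n) \<Omega> c b)"
    using A p_eq_0_outside_kball by (intro sum.mono_neutral_left) auto
  moreover have "(\<Sum>j\<le>Suc n. P (Suc j) B a c * P (Suc n - j) \<Omega> c b)
      = p a c * P (Suc n) \<Omega> c b + (\<Sum>j\<le>n. P (Suc (Suc j)) B a c * P (n - j) \<Omega> c b)" for c
    by (subst sum.atMost_Suc_shift) (simp add: pn_1)
  ultimately show ?case
    by (simp add: B_def sum.distrib del: sum.atMost_Suc)
qed

lemma pn_first_entrance:
  assumes A: "finite A" and a: "a \<notin> A" and b: "b \<notin> \<Omega>"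
  shows "P n \<Omega> a b = P n (\<Omega> - A) a b + (\<Sum>c\<in>A \<inter> \<Omega>. \<Sum>i\<le>n. P i (\<Omega> - A) a c * P (n - i) \<Omega> c b)"
proof (cases n)
  case 0
  then show ?thesis
    using a by (auto simp: pn_0 intro!: sum.neutral)
next
  case (Suc m)
  have "(\<Sum>i\<le>Suc m. P i (\<Omega> - A) a c * P (Suc m - i) \<Omega> c b)
      = (\<Sum>j\<le>m. P (Suc j) (\<Omega> - A) a c * P (m - j) \<Omega> c b)" if "c \<in> A" for c
    using a that by (subst sum.atMost_Suc_shift) (auto simp: pn_0)
  then show ?thesis
    using pn_Suc_first_entrance[OF assms, of m] Suc by simp
qed

lemma Gz_summable_norm:
  assumes z: "norm z < 1"
  shows "summable (\<lambda>n. norm (complex_of_real (P n \<Omega> a b) * z ^ n))"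
proof (rule summable_comparison_test)
  show "summable (\<lambda>n. norm z ^ n)"
    using z by (simp add: summable_geometric)
  show "\<exists>N. \<forall>n\<ge>N. norm (norm (complex_of_real (P n \<Omega> a b) * z ^ n)) \<le> norm z ^ n"
    using pn_nonneg_le_1 by (auto simp: norm_mult norm_power intro!: mult_left_le_one_le)
qed

lemma Gz_sums: "norm z < 1 \<Longrightarrow> (\<lambda>n. complex_of_real (P n \<Omega> a b) * z ^ n) sums G z a b \<Omega>"
  unfolding Gz_def using Gz_summable_norm by (blast intro: summable_sums summable_norm_cancel)

lemma Gz_mult_sums:
  assumes z: "norm z < 1"
  shows "(\<lambda>n. complex_of_real (\<Sum>i\<le>n. P i \<Omega>1 a c * P (n - i) \<Omega>2 c b) * z ^ n)
           sums (G z a c \<Omega>1 * G z c b \<Omega>2)"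
proof -
  have "(\<lambda>n. \<Sum>i\<le>n. (complex_of_real (P i \<Omega>1 a c) * z ^ i) * (complex_of_real (P (n - i) \<Omega>2 c b) * z ^ (n - i)))
          sums (G z a c \<Omega>1 * G z c b \<Omega>2)"
    unfolding Gz_def by (rule Cauchy_product_sums[OF Gz_summable_norm[OF z] Gz_summable_norm[OF z]])
  moreover have "(complex_of_real (P i \<Omega>1 a c) * z ^ i) * (complex_of_real (P (n - i) \<Omega>2 c b) * z ^ (n - i))
      = complex_of_real (P i \<Omega>1 a c * P (n - i) \<Omega>2 c b) * z ^ n" if "i \<le> n" for i n
    using that by (simp add: power_add[symmetric] mult_ac)
  ultimately show ?thesis
    by (simp add: sum_distrib_right)
qed

lemma Gz_first_entrance:
  assumes z: "norm z < 1" and A: "finite A" and a: "a \<notin> A" and b: "b \<notin> \<Omega>"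
  shows "G z a b \<Omega> = G z a b (\<Omega> - A) + (\<Sum>c\<in>A \<inter> \<Omega>. G z a c (\<Omega> - A) * G z c b \<Omega>)"
proof -
  have "(\<lambda>n. complex_of_real (P n (\<Omega> - A) a b) * z ^ n
        + (\<Sum>c\<in>A \<inter> \<Omega>. complex_of_real (\<Sum>i\<le>n. P i (\<Omega> - A) a c * P (n - i) \<Omega> c b) * z ^ n))
        sums (G z a b (\<Omega> - A) + (\<Sum>c\<in>A \<inter> \<Omega>. G z a c (\<Omega> - A) * G z c b \<Omega>))"
    by (intro sums_add Gz_sums[OF z] sums_sum Gz_mult_sums[OF z])
  then have "(\<lambda>n. complex_of_real (P n \<Omega> a b) * z ^ n)
      sums (G z a b (\<Omega> - A) + (\<Sum>c\<in>A \<inter> \<Omega>. G z a c (\<Omega> - A) * G z c b \<Omega>))"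
    unfolding pn_first_entrance[OF A a b]
    by (simp only: of_real_add of_real_sum distrib_right sum_distrib_right)
  then show ?thesis
    using Gz_sums[OF z] sums_unique2 by blast
qed

lemma Gz_first_step:
  assumes z: "norm z < 1" and b: "b \<notin> \<Omega>" and ab: "a \<noteq> b"
  shows "G z a b \<Omega> = z * complex_of_real (p a b)
           + (\<Sum>c\<in>\<Omega> \<inter> kball a. z * complex_of_real (p a c) * G z c b \<Omega>)"
proof -
  have coeff: "P (Suc n) \<Omega> a b = (if n = 0 then p a b else 0) + (\<Sum>c\<in>\<Omega> \<inter> kball a. p a c * P n \<Omega> c b)"
    for n
    using b by (cases n) (auto simp: pn_1 pn_Suc_Suc pn_0 intro!: sum.neutral)
  have "(\<lambda>n. complex_of_real (if n = 0 then p a b else 0) * z ^ n) = (\<lambda>n. if n = 0 then complex_of_real (p a b) else 0)"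
    by auto
  then have "(\<lambda>n. complex_of_real (if n = 0 then p a b else 0) * z ^ n) sums complex_of_real (p a b)"
    using sums_single[of 0 "\<lambda>_. complex_of_real (p a b)"] by simp
  then have "(\<lambda>n. z * (complex_of_real (if n = 0 then p a b else 0) * z ^ n
         + (\<Sum>c\<in>\<Omega> \<inter> kball a. complex_of_real (p a c) * (complex_of_real (P n \<Omega> c b) * z ^ n))))
      sums (z * (complex_of_real (p a b) + (\<Sum>c\<in>\<Omega> \<inter> kball a. complex_of_real (p a c) * G z c b \<Omega>)))"
    by (intro sums_mult sums_add sums_sum Gz_sums[OF z])
  then have "(\<lambda>n. complex_of_real (P (Suc n) \<Omega> a b) * z ^ Suc n)
      sums (z * (complex_of_real (p a b) + (\<Sum>c\<in>\<Omega> \<inter> kball a. complex_of_real (p a c) * G z c b \<Omega>)))"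
    unfolding coeff by (simp only: of_real_add of_real_sum of_real_mult distrib_right distrib_left
        sum_distrib_right sum_distrib_left power_Suc mult_ac)
  then have "(\<lambda>n. complex_of_real (P n \<Omega> a b) * z ^ n)
      sums (z * (complex_of_real (p a b) + (\<Sum>c\<in>\<Omega> \<inter> kball a. complex_of_real (p a c) * G z c b \<Omega>))
            + complex_of_real (P 0 \<Omega> a b) * z ^ 0)"
    by (subst sums_Suc_iff[symmetric])
  then have "(\<lambda>n. complex_of_real (P n \<Omega> a b) * z ^ n)
      sums (z * (complex_of_real (p a b) + (\<Sum>c\<in>\<Omega> \<inter> kball a. complex_of_real (p a c) * G z c b \<Omega>)))"
    using ab by (simp add: pn_0)
  then show ?thesis
    using sums_unique2[OF Gz_sums[OF z]] by (simp add: distrib_left sum_distrib_left mult.assoc)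
qed

end

subsection \<open>Decomposition along a geodesic\<close>

lemma increasing_prefix_add_le:
  assumes "\<forall>j. Suc j < l \<longrightarrow> s j < (s (Suc j) :: nat)" "i \<le> j" "j < l"
  shows "s i + (j - i) \<le> s j"
  using assms(2,3)
proof (induction j)
  case (Suc j)
  then show ?case
    using assms(1) by (cases "i = Suc j") (auto simp: Suc_diff_le)
qed simp

locale tree_kernel_geodesic = tree_kernel E p k for E :: "'v \<Rightarrow> 'v \<Rightarrow> bool" and p k +
  fixes x y :: 'v
begin

abbreviation X where "X i \<equiv> geod E x y ! i"
abbreviation m where "m \<equiv> d x y"

text \<open>For \<open>c = c\<^sub>s\<^sub>-\<^sub>1\<close> this is the index \<open>i\<^sub>s = 1 + max {i. c\<^sub>s\<^sub>-\<^sub>1 \<in> B(x\<^sub>i)}\<close> of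
  the paper, with \<open>[x, y] = (x\<^sub>0, ..., x\<^sub>m)\<close>.\<close>

definition next_index :: "'v \<Rightarrow> nat" where
  "next_index c = Suc (Max {i. i \<le> m \<and> c \<in> kball (X i)})"

definition near_geodesic :: "'v \<Rightarrow> bool" where
  "near_geodesic c \<longleftrightarrow> c \<notin> kball y \<and> (\<exists>i\<le>m. c \<in> kball (X i))"

lemma next_index_gt: "i \<le> m \<Longrightarrow> c \<in> kball (X i) \<Longrightarrow> i < next_index c"
  unfolding next_index_def by (simp add: le_imp_less_Suc)

lemma near_geodesic_next_index:
  assumes c: "near_geodesic c"
  shows "1 \<le> next_index c" "next_index c \<le> m"
    "d c (X (next_index c - 1)) \<le> k" "d c (X (next_index c)) = Suc k"
proof -
  define S where "S = {i. i \<le> m \<and> c \<in> kball (X i)}"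
  have next_index: "next_index c = Suc (Max S)"
    by (simp add: next_index_def S_def)
  have "finite S" "S \<noteq> {}"
    using c by (auto simp: near_geodesic_def S_def)
  then have MS: "Max S \<in> S" "Suc (Max S) \<notin> S"
    using Max_in Max_ge Suc_n_not_le_n by blast+
  moreover have "Max S \<noteq> m"
    using MS c geod_nth_gdist by (auto simp: S_def near_geodesic_def)
  ultimately have "Max S < m"
    by (auto simp: S_def)
  then show "1 \<le> next_index c" "next_index c \<le> m"
    by (simp_all add: next_index)
  show "d c (X (next_index c - 1)) \<le> k"
    using MS by (simp add: S_def next_index mem_kball_iff)
  moreover have "d c (X (next_index c)) \<le> d c (X (next_index c - 1)) + 1"
    using geod_adj[of "Max S" x y] gdist_adj_le[OF adj_sym] \<open>Max S < m\<close> by (simp add: next_index)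
  moreover have "\<not> d c (X (next_index c)) \<le> k"
    using MS \<open>Max S < m\<close> by (simp add: S_def next_index mem_kball_iff)
  ultimately show "d c (X (next_index c)) = Suc k"
    by linarith
qed

text \<open>By quasi-convexity of distances along \<open>[x, y]\<close>, a point at distance \<open>k + 1\<close> from \<open>x\<^sub>t\<close>
  and at most \<open>k\<close> from some earlier \<open>x\<^sub>l\<^sub>o\<close> is within distance \<open>k\<close> of \<open>x\<^sub>i\<close> exactly
  for \<open>lo \<le> i < t\<close>.\<close>

lemma next_index_eqI:
  assumes lo: "lo < t" "t \<le> m" and dlo: "d w (X lo) \<le> k" and dt: "d w (X t) = Suc k"
  shows "next_index w = t" "near_geodesic w"
proof -
  have g: "geodesic (geod E x y)" and len: "length (geod E x y) = Suc m"
    using geod_geodesic length_geod by auto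
  have far: "Suc k < d w (X i)" if "t < i" "i \<le> m" for i
    using gdist_geodesic_quasiconvex[OF g, of lo t i w] lo that len dlo dt by simp
  have near: "d w (X i) \<le> k" if "lo \<le> i" "i < t" for i
    using gdist_geodesic_quasiconvex[OF g, of lo i t w] lo that len dlo dt
    by (cases "i = lo") simp_all
  have "Max {i. i \<le> m \<and> w \<in> kball (X i)} = t - 1"
  proof (rule Max_eqI)
    fix i
    assume "i \<in> {i. i \<le> m \<and> w \<in> kball (X i)}"
    then show "i \<le> t - 1"
      using far[of i] dt by (cases "t \<le> i"; cases "t = i") (auto simp: mem_kball_iff)
  qed (use near[of "t - 1"] lo in \<open>auto simp: mem_kball_iff\<close>)
  then show "next_index w = t"
    using lo by (simp add: next_index_def)
  have "w \<notin> kball y"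
    using far[of m] dt lo geod_nth_gdist[of x y] by (cases "t = m") (auto simp: mem_kball_iff)
  then show "near_geodesic w"
    using dlo lo by (auto simp: near_geodesic_def mem_kball_iff intro!: exI[of _ lo])
qed

text \<open>With \<open>i\<close> the next index of \<open>c\<close>, a walk from \<open>c\<close> can neither reach \<open>B(y)\<close> nor
  leave the \<open>x\<^sub>i\<^sub>-\<^sub>1\<close>-side of the edge \<open>x\<^sub>i\<^sub>-\<^sub>1 x\<^sub>i\<close> without first entering \<open>B(x\<^sub>i)\<close>:
  its jumps have length at most \<open>k\<close>, and \<open>B(y)\<close> meets that side only inside \<open>B(x\<^sub>i)\<close>.\<close>

lemma pn_avoiding_next_ball:
  assumes c: "near_geodesic c"
  defines "A \<equiv> kball (X (next_index c))"
  shows "P n (- kball y - A) c t = P n (- A) c t"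
    and "t \<in> kball y \<Longrightarrow> t \<notin> A \<Longrightarrow> P n (- kball y - A) c t = 0"
proof -
  define i where "i = next_index c"
  have i: "1 \<le> i" "i \<le> m" and dc: "d c (X (i - 1)) \<le> k" "d c (X i) = Suc k"
    using near_geodesic_next_index[OF c] by (simp_all add: i_def)
  define a where "a = X (i - 1)"
  define b where "b = X i"
  have ab: "E a b"
    using geod_adj[of "i - 1" x y] i by (simp add: a_def b_def)
  have A: "A = kball b"
    by (simp add: A_def b_def i_def)
  define side where "side w \<longleftrightarrow> d w a < d w b" for w
  have "d y b \<le> d y a"
    using gdist_geod_nth[of "i - 1" m x y] gdist_geod_nth[of i m x y] i geod_nth_gdist[of x y]
      gdist_commute[of y a] gdist_commute[of y b]
    by (simp add: a_def b_def)
  then have ball_y: "w \<in> A" if "side w" "w \<in> kball y" for w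
    using gdist_endpoint_le_across_edge(1)[OF ab, of w y] that by (simp add: A side_def mem_kball_iff)
  have enter: "w' \<in> A" if "side w" "\<not> side w'" "d w w' \<le> k" for w w'
    using gdist_endpoint_le_across_edge(2)[OF ab, of w w'] that by (simp add: A side_def mem_kball_iff)
  define Inv where "Inv w \<longleftrightarrow> side w \<and> w \<notin> A" for w
  have Inv_c: "Inv c"
    using dc by (simp add: Inv_def side_def a_def b_def A mem_kball_iff i_def)
  have Inv_step: "(c' \<in> - kball y - A \<longleftrightarrow> c' \<in> - A) \<and> (c' \<in> - kball y - A \<longrightarrow> Inv c')"
    if "Inv w" "c' \<in> kball w" for w c'
    using that ball_y enter[of w c'] by (auto simp: Inv_def ball_k_def)
  show "P n (- kball y - A) c t = P n (- A) c t"
    using Inv_c Inv_step by (rule pn_cong_invariant)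
  show "P n (- kball y - A) c t = 0" if t: "t \<in> kball y" "t \<notin> A"
    using Inv_c
  proof (rule pn_eq_0_invariant)
    fix w
    assume w: "Inv w"
    then have "t \<notin> kball w"
      using t ball_y enter[of w t] by (auto simp: Inv_def ball_k_def)
    then show "w \<noteq> t \<and> p w t = 0 \<and> (\<forall>c'\<in>(- kball y - A) \<inter> kball w. Inv c')"
      using w Inv_step[OF w] p_eq_0_outside_kball by (auto simp: ball_k_def)
  qed
qed

definition vnext :: "complex \<Rightarrow> 'v \<Rightarrow> 'v \<Rightarrow> complex" where
  "vnext z c c' = vz E p k z (c, c', X (next_index c))"

lemma Gz_next_ball_entrance:
  assumes c: "near_geodesic c" and b: "b \<in> kball y" and z: "norm z < 1"
  defines "A \<equiv> kball (X (next_index c))"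
  shows "G z c b (- kball y) = (if b \<in> A then vnext z c b else 0) + (\<Sum>c'\<in>A - kball y. vnext z c c' * G z c' b (- kball y))"
proof -
  have "c \<notin> A"
    using near_geodesic_next_index(4)[OF c] by (simp add: A_def mem_kball_iff)
  then have "G z c b (- kball y) = G z c b (- kball y - A) + (\<Sum>c'\<in>A \<inter> - kball y. G z c c' (- kball y - A) * G z c' b (- kball y))"
    using b by (intro Gz_first_entrance z) (simp_all add: A_def finite_ball_k)
  also have "G z c b (- kball y - A) = (if b \<in> A then vnext z c b else 0)"
    using pn_avoiding_next_ball[OF c] b by (simp add: vnext_def vz_def A_def Gz_def)
  also have "(\<Sum>c'\<in>A \<inter> - kball y. G z c c' (- kball y - A) * G z c' b (- kball y))
      = (\<Sum>c'\<in>A - kball y. vnext z c c' * G z c' b (- kball y))"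
    using pn_avoiding_next_ball(1)[OF c] by (intro sum.cong) (auto simp: vnext_def vz_def A_def Gz_def)
  finally show ?thesis .
qed

text \<open>The chains starting at \<open>x\<close> are exactly the elements of \<open>\<Xi>\<^bsub>[x,y]\<^esub>\<close> ending at the given
  point (\<open>Xi_path_eq_chains\<close>); recursively, each point determines through its next index the
  ball containing the following one.\<close>

fun chain :: "'v list \<Rightarrow> bool" where
  "chain [] = False"
| "chain [c] = (c \<in> kball y)"
| "chain (c # c' # cs) = (near_geodesic c \<and> (c, c') \<in> Xi E p k (X (next_index c)) \<and> chain (c' # cs))"

fun chain_weight :: "complex \<Rightarrow> 'v list \<Rightarrow> complex" where
  "chain_weight z [] = 1"
| "chain_weight z [c] = 1"
| "chain_weight z (c # c' # cs) = vnext z c c' * chain_weight z (c' # cs)"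

definition chains :: "'v \<Rightarrow> 'v \<Rightarrow> 'v list set" where
  "chains c b = {cs. chain cs \<and> hd cs = c \<and> last cs = b}"

lemma path_index_eq_next_index: "path_index E k x y cs j = next_index (cs ! (j - 1))"
  by (simp add: path_index_def next_index_def length_geod)

lemma prod_vz_eq_chain_weight:
  "(\<Prod>j\<in>{1..length cs - 1}. vz E p k z (cs ! (j - 1), cs ! j, X (path_index E k x y cs j)))
     = chain_weight z cs"
proof (induction z cs rule: chain_weight.induct)
  case (3 z c c' cs)
  define f where "f cs j = vz E p k z (cs ! (j - 1), cs ! j, X (next_index (cs ! (j - 1))))" for cs j
  have "(\<Prod>j\<in>{1..Suc (length cs)}. f (c # c' # cs) j)
      = f (c # c' # cs) 1 * (\<Prod>j\<in>{Suc 1..Suc (length cs)}. f (c # c' # cs) j)"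
    by (rule prod.atLeast_Suc_atMost) simp
  also have "(\<Prod>j\<in>{Suc 1..Suc (length cs)}. f (c # c' # cs) j) = (\<Prod>j\<in>{1..length cs}. f (c # c' # cs) (Suc j))"
    by (rule prod.shift_bounds_cl_Suc_ivl)
  also have "(\<Prod>j\<in>{1..length cs}. f (c # c' # cs) (Suc j)) = (\<Prod>j\<in>{1..length (c' # cs) - 1}. f (c' # cs) j)"
    by (rule prod.cong) (auto simp: f_def nth_Cons split: nat.splits)
  finally show ?case
    using 3 by (simp add: f_def path_index_eq_next_index vnext_def)
qed simp_all

lemma chain_iff_nth:
  "chain cs \<longleftrightarrow> cs \<noteq> [] \<and> last cs \<in> kball y \<and>
     (\<forall>j. Suc j < length cs \<longrightarrow> near_geodesic (cs ! j) \<and> (cs ! j, cs ! Suc j) \<in> Xi E p k (X (next_index (cs ! j))))"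
proof (induction cs rule: chain.induct)
  case (3 c c' cs)
  define Q where "Q cs j \<longleftrightarrow> near_geodesic (cs ! j) \<and> (cs ! j, cs ! Suc j) \<in> Xi E p k (X (next_index (cs ! j)))"
    for cs j
  have "(\<forall>j. Suc j < length (c # c' # cs) \<longrightarrow> Q (c # c' # cs) j)
      \<longleftrightarrow> Q (c # c' # cs) 0 \<and> (\<forall>j. Suc j < length (c' # cs) \<longrightarrow> Q (c' # cs) j)"
    using All_less_Suc2[of "length cs" "Q (c # c' # cs)"] by (simp add: Q_def)
  then show ?case
    unfolding chain.simps 3 Q_def by (simp add: conj_ac)
qed simp_all

lemma chains_kball: "c \<in> kball y \<Longrightarrow> chains c b = (if c = b then {[b]} else {})"
  by (auto simp: chains_def near_geodesic_def elim: chain.elims)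

lemma chains_near_geodesic:
  assumes c: "near_geodesic c"
  shows "chains c b = (\<lambda>cs. c # cs) ` (\<Union>c'\<in>{c'. (c, c') \<in> Xi E p k (X (next_index c))}. chains c' b)"
proof (intro equalityI subsetI)
  fix cs
  assume "cs \<in> chains c b"
  then show "cs \<in> (\<lambda>cs. c # cs) ` (\<Union>c'\<in>{c'. (c, c') \<in> Xi E p k (X (next_index c))}. chains c' b)"
    using c by (cases cs rule: chain.cases) (auto simp: chains_def near_geodesic_def)
next
  fix cs
  assume "cs \<in> (\<lambda>cs. c # cs) ` (\<Union>c'\<in>{c'. (c, c') \<in> Xi E p k (X (next_index c))}. chains c' b)"
  then obtain c' cs' where "cs = c # c' # cs'" "(c, c') \<in> Xi E p k (X (next_index c))" "c' # cs' \<in> chains c' b"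
    by (auto simp: chains_def elim: chain.elims)
  then show "cs \<in> chains c b"
    using c by (auto simp: chains_def)
qed

lemma vnext_eq_0:
  assumes c: "near_geodesic c" and c': "c' \<in> kball (X (next_index c))"
    and not_Xi: "(c, c') \<notin> Xi E p k (X (next_index c))"
  shows "vnext z c c' = 0"
proof -
  have "c \<in> bdry_k E k (X (next_index c))"
    using near_geodesic_next_index(4)[OF c] by (simp add: mem_bdry_k_iff)
  then have "\<not> P n (- kball (X (next_index c))) c c' > 0" for n
    using c' not_Xi by (auto simp: Xi_def)
  then have "P n (- kball (X (next_index c))) c c' = 0" for n
    using pn_nonneg_le_1[of n "- kball (X (next_index c))" c c'] by (meson not_less order_antisym)
  then show ?thesis
    by (simp add: vnext_def vz_def Gz_def)
qed

lemma sum_chain_weight_near_geodesic: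
  assumes c: "near_geodesic c"
    and fin: "\<And>c'. c' \<in> kball (X (next_index c)) \<Longrightarrow> finite (chains c' b)"
  shows "finite (chains c b)"
    "(\<Sum>cs\<in>chains c b. chain_weight z cs)
       = (\<Sum>c'\<in>kball (X (next_index c)). vnext z c c' * (\<Sum>cs\<in>chains c' b. chain_weight z cs))"
proof -
  define A where "A = kball (X (next_index c))"
  define A' where "A' = {c'. (c, c') \<in> Xi E p k (X (next_index c))}"
  have A: "finite A" "A' \<subseteq> A"
    by (auto simp: A_def A'_def Xi_def finite_ball_k)
  then have "finite A'"
    by (rule finite_subset[rotated])
  have chains_c: "chains c b = (\<lambda>cs. c # cs) ` (\<Union>c'\<in>A'. chains c' b)"
    using chains_near_geodesic[OF c] by (simp add: A'_def)
  show "finite (chains c b)"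
    unfolding chains_c using \<open>finite A'\<close> fin A by (auto simp: A_def)
  have "(\<Sum>cs\<in>chains c b. chain_weight z cs) = (\<Sum>c'\<in>A'. \<Sum>cs\<in>chains c' b. chain_weight z (c # cs))"
    unfolding chains_c using \<open>finite A'\<close> fin A
    by (subst sum.reindex) (auto simp: inj_on_def chains_def A_def intro!: sum.UNION_disjoint)
  also have "\<dots> = (\<Sum>c'\<in>A'. vnext z c c' * (\<Sum>cs\<in>chains c' b. chain_weight z cs))"
  proof (rule sum.cong[OF refl])
    fix c'
    have "chain_weight z (c # cs) = vnext z c c' * chain_weight z cs" if "cs \<in> chains c' b" for cs
      using that by (cases cs) (auto simp: chains_def)
    then show "(\<Sum>cs\<in>chains c' b. chain_weight z (c # cs)) = vnext z c c' * (\<Sum>cs\<in>chains c' b. chain_weight z cs)"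
      by (simp add: sum_distrib_left)
  qed
  also have "\<dots> = (\<Sum>c'\<in>A. vnext z c c' * (\<Sum>cs\<in>chains c' b. chain_weight z cs))"
    using A vnext_eq_0[OF c] by (intro sum.mono_neutral_left) (auto simp: A_def A'_def)
  finally show "(\<Sum>cs\<in>chains c b. chain_weight z cs)
      = (\<Sum>c'\<in>kball (X (next_index c)). vnext z c c' * (\<Sum>cs\<in>chains c' b. chain_weight z cs))"
    by (simp add: A_def)
qed

lemma sum_chain_weight_eq_Gz:
  assumes z: "norm z < 1" and b: "b \<in> kball y" and c: "near_geodesic c"
  shows "finite (chains c b) \<and> (\<Sum>cs\<in>chains c b. chain_weight z cs) = G z c b (- kball y)"
  using c
proof (induction "m - next_index c" arbitrary: c rule: less_induct)
  case less
  note c = less.prems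
  define A where "A = kball (X (next_index c))"
  define h where "h c' = (if c' \<in> kball y then (if c' = b then 1 else 0) else G z c' b (- kball y))" for c'
  have IH: "finite (chains c' b) \<and> (\<Sum>cs\<in>chains c' b. chain_weight z cs) = h c'" if "c' \<in> A" for c'
  proof (cases "c' \<in> kball y")
    case False
    have "next_index c \<le> m"
      using near_geodesic_next_index(2)[OF c] .
    then have c': "near_geodesic c'" and "next_index c < next_index c'"
      using False that next_index_gt by (auto simp: near_geodesic_def A_def)
    moreover have "next_index c' \<le> m"
      using near_geodesic_next_index(2)[OF c'] .
    ultimately show ?thesis
      using less.hyps[OF _ c'] False by (simp add: h_def)
  qed (auto simp: chains_kball h_def)
  have "(\<Sum>cs\<in>chains c b. chain_weight z cs) = (\<Sum>c'\<in>A. vnext z c c' * h c')"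
    using sum_chain_weight_near_geodesic(2)[OF c] IH by (simp add: A_def)
  also have "\<dots> = (\<Sum>c'\<in>A \<inter> kball y. vnext z c c' * h c') + (\<Sum>c'\<in>A - kball y. vnext z c c' * h c')"
    by (metis A_def Diff_eq finite_ball_k sum.Int_Diff)
  also have "(\<Sum>c'\<in>A \<inter> kball y. vnext z c c' * h c') = (\<Sum>c'\<in>A \<inter> kball y. if c' = b then vnext z c c' else 0)"
    by (rule sum.cong) (auto simp: h_def)
  also have "\<dots> = (if b \<in> A then vnext z c b else 0)"
    using b by (simp add: sum.delta A_def finite_ball_k)
  also have "(\<Sum>c'\<in>A - kball y. vnext z c c' * h c') = (\<Sum>c'\<in>A - kball y. vnext z c c' * G z c' b (- kball y))"
    by (rule sum.cong) (auto simp: h_def)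
  also have "(if b \<in> A then vnext z c b else 0) + \<dots> = G z c b (- kball y)"
    using Gz_next_ball_entrance[OF c b z] by (simp add: A_def)
  finally show ?case
    using sum_chain_weight_near_geodesic(1)[OF c] IH by (simp add: A_def)
qed

lemma Xi_path_idx_chain:
  assumes "Xi_path_idx E p k x y cs is"
  shows "chain cs"
proof -
  define l where "l = length is"
  note H = assms[unfolded Xi_path_idx_def Let_def length_geod diff_Suc_1, folded l_def]
  have len: "length cs = Suc l" "0 < l" and inc: "\<forall>j. Suc j < l \<longrightarrow> is ! j < is ! Suc j"
    and "is ! (l - 1) \<le> m" "0 < is ! 0"
    using H by blast+
  have Xis: "\<forall>j. 1 \<le> j \<and> j \<le> l \<longrightarrow> (cs ! (j - 1), cs ! j) \<in> Xi E p k (X (is ! (j - 1)))"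
    using H by blast
  have first: "d (cs ! 0) (X 0) \<le> k" "d (cs ! 0) (X (is ! 0)) = Suc k"
    using H geod_nth_0[of x y] by (auto simp: mem_kball_iff mem_bdry_k_iff)
  have inner: "d (cs ! j) (X (is ! (j - 1))) \<le> k" "d (cs ! j) (X (is ! j)) = Suc k"
    if "1 \<le> j" "j \<le> l - 1" for j
    using H that by (auto simp: mem_kball_iff mem_bdry_k_iff)
  have step: "near_geodesic (cs ! j) \<and> (cs ! j, cs ! Suc j) \<in> Xi E p k (X (next_index (cs ! j)))"
    if j: "j < l" for j
  proof -
    define lo where "lo = (if j = 0 then 0 else is ! (j - 1))"
    have "lo < is ! j"
      using inc j \<open>0 < is ! 0\<close> by (cases j) (auto simp: lo_def)
    moreover have "j \<le> l - 1" "l - 1 < l"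
      using j by simp_all
    then have "is ! j + (l - 1 - j) \<le> is ! (l - 1)"
      by (rule increasing_prefix_add_le[OF inc])
    then have "is ! j \<le> m"
      using \<open>is ! (l - 1) \<le> m\<close> by linarith
    moreover have "d (cs ! j) (X lo) \<le> k" "d (cs ! j) (X (is ! j)) = Suc k"
      using first inner[of j] j by (cases "j = 0"; simp add: lo_def)+
    ultimately have "next_index (cs ! j) = is ! j" "near_geodesic (cs ! j)"
      using next_index_eqI by blast+
    then show ?thesis
      using Xis[rule_format, of "Suc j"] j by simp
  qed
  have "cs \<noteq> []" "cs ! l \<in> kball y"
    using H len by auto
  then have "last cs \<in> kball y"
    using len by (simp add: last_conv_nth)
  then show ?thesis
    unfolding chain_iff_nth using len step by auto
qed

lemma chain_Xi_path_idx:
  assumes ch: "chain cs" and hd: "hd cs = x" and x: "x \<notin> kball y"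
  shows "Xi_path_idx E p k x y cs (map (\<lambda>j. next_index (cs ! j)) [0..<length cs - 1])"
proof -
  define l where "l = length cs - 1"
  define "is" where "is = map (\<lambda>j. next_index (cs ! j)) [0..<l]"
  have ne: "cs \<noteq> []" and last: "last cs \<in> kball y"
    and steps: "\<And>j. j < l \<Longrightarrow> near_geodesic (cs ! j) \<and> (cs ! j, cs ! Suc j) \<in> Xi E p k (X (is ! j))"
    using ch unfolding chain_iff_nth by (auto simp: is_def l_def)
  have len: "length cs = Suc l"
    using ne by (simp add: l_def)
  have cs0: "cs ! 0 = x"
    using hd ne by (simp add: hd_conv_nth)
  have "l \<noteq> 0"
    using cs0 last x len ne by (cases l) (auto simp: last_conv_nth)
  have is_le: "is ! j \<le> m" "1 \<le> is ! j" if "j < l" for j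
    using near_geodesic_next_index[of "cs ! j"] steps[OF that] that by (simp_all add: is_def)
  have Xi: "d (cs ! j) (X (is ! j)) = Suc k" "d (cs ! Suc j) (X (is ! j)) \<le> k" if "j < l" for j
    using Xi_gdist steps[OF that] by blast+
  have inc: "\<forall>j. Suc j < l \<longrightarrow> is ! j < is ! Suc j"
    using next_index_gt is_le Xi by (simp add: is_def mem_kball_iff)
  have "l \<le> m"
    using increasing_prefix_add_le[OF inc, of 0 "l - 1"] is_le[of 0] is_le[of "l - 1"] \<open>l \<noteq> 0\<close> by simp
  have len_is: "length is = l"
    by (simp add: is_def)
  have "Xi_path_idx E p k x y cs is"
    unfolding Xi_path_idx_def Let_def length_geod diff_Suc_1 len_is
  proof (intro conjI allI impI)
    show "length cs = Suc l" "0 < l" "l \<le> m"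
      using len \<open>l \<noteq> 0\<close> \<open>l \<le> m\<close> by simp_all
    show "0 < is ! 0" "is ! (l - 1) \<le> m"
      using is_le[of 0] is_le[of "l - 1"] \<open>l \<noteq> 0\<close> by simp_all
    show "is ! j < is ! Suc j" if "Suc j < l" for j
      using inc that by simp
    show "cs ! 0 \<in> kball x \<inter> bdry_k E k (X (is ! 0))"
      using cs0 Xi(1)[of 0] \<open>l \<noteq> 0\<close> by (simp add: mem_kball_iff mem_bdry_k_iff)
    show "cs ! j \<in> kball (X (is ! (j - 1))) \<inter> bdry_k E k (X (is ! j))"
      if "1 \<le> j \<and> j \<le> l - 1" for j
    proof -
      have "j - 1 < l" "j < l" "Suc (j - 1) = j"
        using that \<open>l \<noteq> 0\<close> by auto
      then show ?thesis
        using Xi(2)[of "j - 1"] Xi(1)[of j] by (simp add: mem_kball_iff mem_bdry_k_iff)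
    qed
    show "cs ! l \<in> kball (X (is ! (l - 1))) \<inter> kball y"
      using Xi(2)[of "l - 1"] last len ne \<open>l \<noteq> 0\<close> by (simp add: mem_kball_iff last_conv_nth)
    show "(cs ! (j - 1), cs ! j) \<in> Xi E p k (X (is ! (j - 1)))" if "1 \<le> j \<and> j \<le> l" for j
    proof -
      have "j - 1 < l"
        using that by auto
      then show ?thesis
        using steps[of "j - 1"] that by simp
    qed
  qed
  then show ?thesis
    by (simp add: is_def l_def)
qed

lemma Xi_path_eq_chains:
  assumes "x \<notin> kball y"
  shows "{cs \<in> Xi_path E p k x y. hd cs = x \<and> last cs = b} = chains x b"
  using Xi_path_idx_chain chain_Xi_path_idx[OF _ _ assms] by (auto simp: Xi_path_def chains_def)

lemma J_path_vz_eq_Gz: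
  assumes x: "x \<notin> kball y" and b: "b \<in> kball y" and z: "norm z < 1"
  shows "J_path E p k (vz E p k z) x y x b = G z x b (- kball y)"
proof -
  have "near_geodesic x"
    using x geod_nth_0[of x y] by (auto simp: near_geodesic_def ball_k_def intro!: exI[of _ 0])
  moreover have "J_path E p k (vz E p k z) x y x b = (\<Sum>cs\<in>chains x b. chain_weight z cs)"
    unfolding J_path_def Xi_path_eq_chains[OF x] prod_vz_eq_chain_weight ..
  ultimately show ?thesis
    using sum_chain_weight_eq_Gz[OF z b] by simp
qed

end

context tree_kernel
begin

lemma Gz_first_step_J_path:
  assumes z: "norm z < 1" and ab: "(a, b) \<in> Xi E p k y"
  shows "G z a b (- kball y) = z * complex_of_real (p a b)
           + (\<Sum>\<^sub>\<infinity>c\<in>- kball y. z * complex_of_real (p a c) * J_path E p k (vz E p k z) c y c b)"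
proof -
  have b: "b \<in> kball y" and "a \<noteq> b"
    using Xi_gdist[OF ab] by (auto simp: mem_kball_iff)
  have J: "J_path E p k (vz E p k z) c y c b = G z c b (- kball y)" if "c \<in> - kball y" for c
  proof -
    interpret tree_kernel_geodesic E p k c y ..
    show ?thesis
      using J_path_vz_eq_Gz that b z by simp
  qed
  have "(\<Sum>\<^sub>\<infinity>c\<in>- kball y. z * complex_of_real (p a c) * J_path E p k (vz E p k z) c y c b)
      = (\<Sum>c\<in>- kball y \<inter> kball a. z * complex_of_real (p a c) * G z c b (- kball y))"
    using finite_ball_k p_eq_0_outside_kball J
    by (subst infsum_cong_neutral[where T = "- kball y \<inter> kball a"]) auto
  then show ?thesis
    using Gz_first_step[OF z _ \<open>a \<noteq> b\<close>] b by simp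
qed

end

theorem proposition4p6:
  fixes E :: "'v \<Rightarrow> 'v \<Rightarrow> bool" and \<Gamma> :: "('v \<Rightarrow> 'v) set"
    and p :: "'v \<Rightarrow> 'v \<Rightarrow> real" and k :: nat
  assumes tree: "is_tree E"
    and valence: "bounded_valence E"
    and group: "aut_subgroup E \<Gamma>"
    and cofinite: "finite (orbits \<Gamma>)"
    and kernel: "transition_kernel p"
    and invariant: "\<forall>g\<in>\<Gamma>. \<forall>x y. p (g x) (g y) = p x y"
    and irred: "irreducible_kernel p"
    and range: "\<forall>x y. gdist E x y > k \<longrightarrow> p x y = 0"
  shows "\<exists>r>0. \<forall>z::complex. norm z < r \<longrightarrow>
           (\<forall>a b y. (a, b) \<in> Xi E p k y \<longrightarrow>
              Gz p z a b (- ball_k E k y)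
              = z * complex_of_real (p a b)
                + (\<Sum>\<^sub>\<infinity>c\<in>- ball_k E k y.
                     z * complex_of_real (p a c) * J_path E p k (vz E p k z) c y c b))"
proof -
  interpret tree_kernel E p k
    using tree valence kernel range by unfold_locales
  show ?thesis
    using Gz_first_step_J_path by (intro exI[of _ 1]) auto
qed

end
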